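(* Let $\Sigma$ be a finite alphabet with $|\Sigma|\ge2$, $n\ge1$, and $\rho_1,\rho_2,\rho_3>0$ with $\rho_1+\rho_2+\rho_3\le1$. For $0<\varepsilon<1$, the $\varepsilon$-mixing time $\tau(\varepsilon)$ of the lazy Markov chain $L^{\mathfrak{A}(n)}_{\rho_1,\rho_2,\rho_3}$ satisfies $$\tau(\varepsilon)\le\max\left(\left\lceil\frac{n}{\rho_1}\Big(\log n+\log\frac{1}{\rho_1\varepsilon}\Big)\right\rceil,\ \left\lceil\frac{n}{\rho_2}\Big(\log n+\log\frac{1}{\rho_2\varepsilon}\Big)\right\rceil,\ \left\lceil\frac{|\Sigma|n^2}{\rho_3}\Big(\log(|\Sigma|n^2)+\log\frac{1}{\rho_3\varepsilon}\Big)\right\rceil\right).$$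
   Context: A non-deterministic automaton (NFA) over $\Sigma$ is a tuple $(Q,\Sigma,\Delta,I,F)$ with $Q$ a finite set of states, $\Delta\subseteq Q\times\Sigma\times Q$, $I,F\subseteq Q$. $\mathfrak{A}(n)$ is the set of all NFAs over $\Sigma$ with state set $Q=\{1,\dots,n\}$. For $\mathcal{A}\in\mathfrak{A}(n)$: $\mathsf{Ch_{init}}(\mathcal{A},q)$ toggles membership of $q$ in $I$; $\mathsf{Ch_{final}}(\mathcal{A},q)$ toggles membership of $q$ in $F$; $\mathsf{Ch_{trans}}(\mathcal{A},(p,a,q))$ toggles membership of $(p,a,q)$ in $\Delta$. The matrix $S=S^{\mathfrak{A}(n)}_{\rho_1,\rho_2,\rho_3}$ on $\mathfrak{A}(n)$ is: for $x\ne y$, $S(x,y)=\rho_1/n$ if $y=\mathsf{Ch_{init}}(x,q)$ for some $q$; $\rho_2/n$ if $y=\mathsf{Ch_{final}}(x,q)$ for some $q$; $\rho_3/(|\Sigma|n^2)$ if $y=\mathsf{Ch_{trans}}(x,(p,a,q))$ for some $(p,a,q)$; $0$ otherwise; and $S(x,x)=1-\sum_{y\ne x}S(x,y)$. The lazy chain $L=L^{\mathfrak{A}(n)}_{\rho_1,\rho_2,\rho_3}$ is $L(x,y)=\frac12 S(x,y)$ for $x\ne y$ and $L(x,x)=\frac12+\frac12S(x,x)$; its stationary distribution $\pi$ is uniform on $\mathfrak{A}(n)$. The $\varepsilon$-mixing time is $\tau(\varepsilon)=\min\{t:\max_{x\in\mathfrak{A}(n)}\|L^t(x,\cdot)-\pi\|_{TV}\le\varepsilon\}$,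 where $\|\cdot\|_{TV}$ is total variation distance. $\log$ denotes the natural logarithm. *)

theory Defs
  imports Complex_Main
begin

text \<open>An NFA over alphabet Sig with state set {1..n}, represented by (I, F, Delta).\<close>
type_synonym 'a nfa = "nat set \<times> nat set \<times> (nat \<times> 'a \<times> nat) set"

definition nfas :: "'a set \<Rightarrow> nat \<Rightarrow> 'a nfa set" where
  "nfas Sig n = {(I, F, D). I \<subseteq> {1..n} \<and> F \<subseteq> {1..n} \<and> D \<subseteq> {1..n} \<times> Sig \<times> {1..n}}"

definition toggle :: "'b \<Rightarrow> 'b set \<Rightarrow> 'b set" where
  "toggle x A = (if x \<in> A then A - {x} else insert x A)"

definition ch_init :: "'a nfa \<Rightarrow> nat \<Rightarrow> 'a nfa" where
  "ch_init A q = (case A of (I, F, D) \<Rightarrow> (toggle q I, F, D))"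

definition ch_final :: "'a nfa \<Rightarrow> nat \<Rightarrow> 'a nfa" where
  "ch_final A q = (case A of (I, F, D) \<Rightarrow> (I, toggle q F, D))"

definition ch_trans :: "'a nfa \<Rightarrow> nat \<times> 'a \<times> nat \<Rightarrow> 'a nfa" where
  "ch_trans A t = (case A of (I, F, D) \<Rightarrow> (I, F, toggle t D))"

definition S_off :: "'a set \<Rightarrow> nat \<Rightarrow> real \<Rightarrow> real \<Rightarrow> real \<Rightarrow> 'a nfa \<Rightarrow> 'a nfa \<Rightarrow> real" where
  "S_off Sig n r1 r2 r3 x y =
     (if \<exists>q\<in>{1..n}. y = ch_init x q then r1 / real n
      else if \<exists>q\<in>{1..n}. y = ch_final x q then r2 / real n
      else if \<exists>t\<in>{1..n} \<times> Sig \<times> {1..n}. y = ch_trans x t then r3 / (real (card Sig) * real n ^ 2)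
      else 0)"

definition S_mat :: "'a set \<Rightarrow> nat \<Rightarrow> real \<Rightarrow> real \<Rightarrow> real \<Rightarrow> 'a nfa \<Rightarrow> 'a nfa \<Rightarrow> real" where
  "S_mat Sig n r1 r2 r3 x y =
     (if x \<noteq> y then S_off Sig n r1 r2 r3 x y
      else 1 - (\<Sum>z\<in>nfas Sig n - {x}. S_off Sig n r1 r2 r3 x z))"

definition L_mat :: "'a set \<Rightarrow> nat \<Rightarrow> real \<Rightarrow> real \<Rightarrow> real \<Rightarrow> 'a nfa \<Rightarrow> 'a nfa \<Rightarrow> real" where
  "L_mat Sig n r1 r2 r3 x y =
     (if x \<noteq> y then S_mat Sig n r1 r2 r3 x y / 2
      else 1 / 2 + S_mat Sig n r1 r2 r3 x x / 2)"

fun L_pow :: "'a set \<Rightarrow> nat \<Rightarrow> real \<Rightarrow> real \<Rightarrow> real \<Rightarrow> nat \<Rightarrow> 'a nfa \<Rightarrow> 'a nfa \<Rightarrow> real" where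
  "L_pow Sig n r1 r2 r3 0 x y = (if x = y then 1 else 0)"
| "L_pow Sig n r1 r2 r3 (Suc t) x y =
     (\<Sum>z\<in>nfas Sig n. L_pow Sig n r1 r2 r3 t x z * L_mat Sig n r1 r2 r3 z y)"

definition unif :: "'a set \<Rightarrow> nat \<Rightarrow> 'a nfa \<Rightarrow> real" where
  "unif Sig n y = 1 / real (card (nfas Sig n))"

definition tv_dist :: "'a set \<Rightarrow> nat \<Rightarrow> real \<Rightarrow> real \<Rightarrow> real \<Rightarrow> nat \<Rightarrow> 'a nfa \<Rightarrow> real" where
  "tv_dist Sig n r1 r2 r3 t x =
     (1 / 2) * (\<Sum>y\<in>nfas Sig n. \<bar>L_pow Sig n r1 r2 r3 t x y - unif Sig n y\<bar>)"

definition mixed :: "'a set \<Rightarrow> nat \<Rightarrow> real \<Rightarrow> real \<Rightarrow> real \<Rightarrow> real \<Rightarrow> nat \<Rightarrow> bool" where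
  "mixed Sig n r1 r2 r3 \<epsilon> t = (\<forall>x\<in>nfas Sig n. tv_dist Sig n r1 r2 r3 t x \<le> \<epsilon>)"

definition mixing_time :: "'a set \<Rightarrow> nat \<Rightarrow> real \<Rightarrow> real \<Rightarrow> real \<Rightarrow> real \<Rightarrow> nat" where
  "mixing_time Sig n r1 r2 r3 \<epsilon> = (LEAST t. mixed Sig n r1 r2 r3 \<epsilon> t)"

end

theory Submission
  imports Defs
begin

text \<open>
  An NFA on states \<open>{1..n}\<close> is a point of the hypercube whose coordinates are the possible
  initial states, final states and transitions, and the lazy chain picks a coordinate \<open>c\<close> with
  probability \<open>w c\<close> and resamples it uniformly (with the remaining probability \<open>1 - W\<close> it stays).
  Averaging the point mass at \<open>x\<close> successively over the coordinates \<open>c\<^sub>1, \<dots>, c\<^sub>N\<close> ends in the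
  uniform distribution, so the point mass is the uniform distribution plus the differences
  \<open>h\<^sub>i\<close> of consecutive averages. Each \<open>h\<^sub>i\<close> is odd under flipping \<open>c\<^sub>i\<close>; the chain preserves this
  oddness and contracts the \<open>\<ell>\<^sub>1\<close>-norm of odd functions by the factor \<open>1 - w c\<^sub>i\<close>. Hence the total
  variation distance after \<open>t\<close> steps is at most \<open>\<Sum>\<^sub>c (1 - w c)\<^sup>t / 2\<close>, and \<open>(1 - r/m)\<^sup>t \<le> exp (-r t/m)\<close>
  makes each of the three groups of coordinates contribute at most \<open>\<rho>\<^sub>j \<epsilon>\<close> at the stated time.
\<close>

datatype 'a coord = Init nat | Final nat | Trans "nat \<times> 'a \<times> nat"

definition coords :: "'a set \<Rightarrow> nat \<Rightarrow> 'a coord set" where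
  "coords Sig n = Init ` {1..n} \<union> Final ` {1..n} \<union> Trans ` ({1..n} \<times> Sig \<times> {1..n})"

fun flip :: "'a coord \<Rightarrow> 'a nfa \<Rightarrow> 'a nfa" where
  "flip (Init q) x = ch_init x q"
| "flip (Final q) x = ch_final x q"
| "flip (Trans t) x = ch_trans x t"

fun holds :: "'a coord \<Rightarrow> 'a nfa \<Rightarrow> bool" where
  "holds (Init q) (I, F, D) = (q \<in> I)"
| "holds (Final q) (I, F, D) = (q \<in> F)"
| "holds (Trans t) (I, F, D) = (t \<in> D)"

definition coord_weight :: "'a set \<Rightarrow> nat \<Rightarrow> real \<Rightarrow> real \<Rightarrow> real \<Rightarrow> 'a coord \<Rightarrow> real" where
  "coord_weight Sig n r1 r2 r3 c = (case c of
       Init q \<Rightarrow> r1 / real n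
     | Final q \<Rightarrow> r2 / real n
     | Trans t \<Rightarrow> r3 / (real (card Sig) * real n ^ 2))"

lemma toggle_toggle [simp]: "toggle a (toggle a A) = A"
  by (auto simp: toggle_def)

lemma toggle_neq [simp]: "toggle a A \<noteq> A" "A \<noteq> toggle a A"
  by (auto simp: toggle_def)

lemma toggle_commute: "toggle a (toggle b A) = toggle b (toggle a A)"
  by (auto simp: toggle_def)

lemma toggle_eq_toggle_iff: "toggle a A = toggle b A \<longleftrightarrow> a = b"
  unfolding toggle_def by (auto split: if_splits)

lemma mem_toggle_iff: "b \<in> toggle a A \<longleftrightarrow> (if b = a then b \<notin> A else b \<in> A)"
  by (auto simp: toggle_def)

lemmas flip_unfold = ch_init_def ch_final_def ch_trans_def

lemma flip_flip [simp]: "flip c (flip c x) = x"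
  by (cases c; cases x) (auto simp: flip_unfold)

lemma flip_neq [simp]: "flip c x \<noteq> x" and "x \<noteq> flip c x"
proof -
  show "flip c x \<noteq> x"
    by (cases c; cases x) (auto simp: flip_unfold)
  then show "x \<noteq> flip c x"
    by auto
qed

lemma flip_commute: "flip c (flip d x) = flip d (flip c x)"
  by (cases c; cases d; cases x) (auto simp: flip_unfold toggle_commute)

lemma flip_eq_flip_iff: "flip c x = flip d x \<longleftrightarrow> c = d"
  by (cases c; cases d; cases x) (auto simp: flip_unfold toggle_eq_toggle_iff)

lemma holds_flip: "holds c (flip d x) = (if c = d then \<not> holds c x else holds c x)"
  by (cases c; cases d; cases x) (auto simp: flip_unfold mem_toggle_iff)

lemma flip_in_nfas: "x \<in> nfas Sig n \<Longrightarrow> c \<in> coords Sig n \<Longrightarrow> flip c x \<in> nfas Sig n"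
  by (cases x) (auto simp: coords_def nfas_def flip_unfold toggle_def)

lemma nfas_eqI:
  assumes "x \<in> nfas Sig n" "y \<in> nfas Sig n" "\<forall>c\<in>coords Sig n. holds c x = holds c y"
  shows "x = y"
proof -
  obtain I F D I' F' D' where xy: "x = (I, F, D)" "y = (I', F', D')"
    by (cases x; cases y)
  have "q \<in> I \<longleftrightarrow> q \<in> I'" "q \<in> F \<longleftrightarrow> q \<in> F'" if "q \<in> {1..n}" for q
    using that assms(3)[rule_format, of "Init q"] assms(3)[rule_format, of "Final q"]
    by (auto simp: coords_def xy)
  moreover have "t \<in> D \<longleftrightarrow> t \<in> D'" if "t \<in> {1..n} \<times> Sig \<times> {1..n}" for t
    using that assms(3)[rule_format, of "Trans t"] by (auto simp: coords_def xy)
  ultimately show ?thesis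
    using assms(1,2) unfolding xy nfas_def by (auto 0 3)
qed

lemma S_off_flip:
  "c \<in> coords Sig n \<Longrightarrow> S_off Sig n r1 r2 r3 x (flip c x) = coord_weight Sig n r1 r2 r3 c"
  by (cases x; cases c) (auto simp: S_off_def coords_def coord_weight_def flip_unfold)

lemma S_off_eq_0:
  assumes "\<forall>c\<in>coords Sig n. y \<noteq> flip c x"
  shows "S_off Sig n r1 r2 r3 x y = 0"
proof -
  have "\<not> (\<exists>q\<in>{1..n}. y = ch_init x q)"
    using assms[rule_format, of "Init _"] by (auto simp: coords_def)
  moreover have "\<not> (\<exists>q\<in>{1..n}. y = ch_final x q)"
    using assms[rule_format, of "Final _"] by (auto simp: coords_def)
  moreover have "\<not> (\<exists>t\<in>{1..n} \<times> Sig \<times> {1..n}. y = ch_trans x t)"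
    using assms[rule_format, of "Trans _"] by (auto simp: coords_def)
  ultimately show ?thesis
    unfolding S_off_def by simp
qed

lemma nfas_eq_Pow: "nfas Sig n = Pow {1..n} \<times> Pow {1..n} \<times> Pow ({1..n} \<times> Sig \<times> {1..n})"
  by (auto simp: nfas_def)

lemma finite_nfas: "finite Sig \<Longrightarrow> finite (nfas Sig n)"
  by (simp add: nfas_eq_Pow)

lemma finite_coords: "finite Sig \<Longrightarrow> finite (coords Sig n)"
  by (simp add: coords_def)

lemma sum_coords:
  assumes "finite Sig"
  shows "(\<Sum>c\<in>coords Sig n. f c) = (\<Sum>q\<in>{1..n}. f (Init q)) + (\<Sum>q\<in>{1..n}. f (Final q))
     + (\<Sum>t\<in>{1..n} \<times> Sig \<times> {1..n}. f (Trans t))"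
proof -
  have "sum f (coords Sig n) = sum f (Init ` {1..n} \<union> Final ` {1..n})
      + sum f (Trans ` ({1..n} \<times> Sig \<times> {1..n}))"
    unfolding coords_def by (rule sum.union_disjoint) (use assms in auto)
  also have "sum f (Init ` {1..n} \<union> Final ` {1..n}) = sum f (Init ` {1..n}) + sum f (Final ` {1..n})"
    by (rule sum.union_disjoint) auto
  finally show ?thesis
    by (simp add: sum.reindex inj_on_def)
qed

lemma card_nfas:
  assumes "finite Sig"
  shows "card (nfas Sig n) = 2 ^ card (coords Sig n)"
proof -
  have "card (coords Sig n) = n + n + card ({1..n} \<times> Sig \<times> {1..n})"
    using sum_coords[OF assms, of "\<lambda>_. 1 :: nat"] by simp
  then show ?thesis
    using assms by (simp add: nfas_eq_Pow card_cartesian_product card_Pow power_add)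
qed

definition agree_on :: "'a coord set \<Rightarrow> 'a nfa \<Rightarrow> 'a nfa \<Rightarrow> bool" where
  "agree_on U x y = (\<forall>c\<in>U. holds c x = holds c y)"

text \<open>Exactly one of \<open>y\<close> and \<open>flip k y\<close> agrees with \<open>x\<close> at \<open>k\<close>.\<close>
lemma of_bool_agree_on_flip:
  assumes "k \<in> U"
  shows "(of_bool (agree_on U x y) + of_bool (agree_on U x (flip k y)) :: real)
    = of_bool (agree_on (U - {k}) x y)"
proof -
  have "agree_on U x z \<longleftrightarrow> agree_on (U - {k}) x z \<and> holds k x = holds k z" for z
    using assms by (auto simp: agree_on_def)
  moreover have "agree_on (U - {k}) x (flip k y) \<longleftrightarrow> agree_on (U - {k}) x y"
    by (auto simp: agree_on_def holds_flip)
  ultimately show ?thesis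
    by (auto simp: holds_flip)
qed

definition avg :: "'a coord \<Rightarrow> ('a nfa \<Rightarrow> real) \<Rightarrow> 'a nfa \<Rightarrow> real" where
  "avg c g y = (g y + g (flip c y)) / 2"

fun avg_iter :: "'a coord list \<Rightarrow> ('a nfa \<Rightarrow> real) \<Rightarrow> nat \<Rightarrow> 'a nfa \<Rightarrow> real" where
  "avg_iter cs g 0 = g"
| "avg_iter cs g (Suc i) = avg (cs ! i) (avg_iter cs g i)"

locale nfa_chain =
  fixes Sig :: "'a set" and n :: nat and r1 r2 r3 :: real
  assumes finite_Sig: "finite Sig" and card_Sig: "card Sig \<ge> 1" and n_ge_1: "n \<ge> 1"
    and r1_nonneg: "r1 \<ge> 0" and r2_nonneg: "r2 \<ge> 0" and r3_nonneg: "r3 \<ge> 0"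
    and r_sum_le_1: "r1 + r2 + r3 \<le> 1"
begin

abbreviation "V \<equiv> nfas Sig n"
abbreviation "C \<equiv> coords Sig n"
abbreviation "w \<equiv> coord_weight Sig n r1 r2 r3"
abbreviation "W \<equiv> \<Sum>c\<in>C. w c"

definition push :: "('a nfa \<Rightarrow> real) \<Rightarrow> 'a nfa \<Rightarrow> real" where
  "push g y = (\<Sum>z\<in>V. g z * L_mat Sig n r1 r2 r3 z y)"

definition l1 :: "('a nfa \<Rightarrow> real) \<Rightarrow> real" where
  "l1 g = (\<Sum>y\<in>V. \<bar>g y\<bar>)"

definition odd_under :: "'a coord \<Rightarrow> ('a nfa \<Rightarrow> real) \<Rightarrow> bool" where
  "odd_under k h = (\<forall>y\<in>V. h (flip k y) = - h y)"

lemma finite_V: "finite V"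
  using finite_nfas[OF finite_Sig] .

lemma finite_C: "finite C"
  using finite_coords[OF finite_Sig] .

lemma weight_nonneg: "w c \<ge> 0"
  using r1_nonneg r2_nonneg r3_nonneg by (cases c) (auto simp: coord_weight_def)

lemma total_weight: "W = r1 + r2 + r3"
  using n_ge_1 card_Sig
  by (simp add: sum_coords[OF finite_Sig] coord_weight_def card_cartesian_product power2_eq_square)

lemma total_weight_le_1: "W \<le> 1"
  using total_weight r_sum_le_1 by simp

lemma weight_le_total: "c \<in> C \<Longrightarrow> w c \<le> W"
  using finite_C weight_nonneg by (intro member_le_sum) auto

lemma flips_subset: "y \<in> V \<Longrightarrow> (\<lambda>c. flip c y) ` C \<subseteq> V - {y}"
  by (simp add: image_subset_iff flip_in_nfas)

lemma inj_on_flips: "inj_on (\<lambda>c. flip c y) A"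
  by (auto simp: inj_on_def flip_eq_flip_iff)

lemma sum_over_flips:
  assumes "y \<in> V" and "\<And>z. z \<in> V - {y} \<Longrightarrow> \<forall>c\<in>C. z \<noteq> flip c y \<Longrightarrow> f z = 0"
  shows "(\<Sum>z\<in>V - {y}. f z) = (\<Sum>c\<in>C. f (flip c y))"
proof -
  have "(\<Sum>z\<in>V - {y}. f z) = (\<Sum>z\<in>(\<lambda>c. flip c y) ` C. f z)"
  proof (rule sum.mono_neutral_right)
    show "\<forall>z\<in>V - {y} - (\<lambda>c. flip c y) ` C. f z = 0"
      using assms(2) by blast
  qed (use assms(1) finite_V flips_subset in auto)
  also have "\<dots> = (\<Sum>c\<in>C. f (flip c y))"
    by (simp add: sum.reindex[OF inj_on_flips])
  finally show ?thesis .
qed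

lemma L_mat_diag: "y \<in> V \<Longrightarrow> L_mat Sig n r1 r2 r3 y y = 1 - W / 2"
proof -
  assume y: "y \<in> V"
  have "(\<Sum>z\<in>V - {y}. S_off Sig n r1 r2 r3 y z) = W"
    using sum_over_flips[OF y, of "S_off Sig n r1 r2 r3 y"] by (auto intro: S_off_eq_0 simp: S_off_flip)
  then show ?thesis
    by (simp add: L_mat_def S_mat_def field_simps)
qed

lemma push_eq:
  assumes y: "y \<in> V"
  shows "push g y = (1 - W) * g y + (\<Sum>c\<in>C. w c * avg c g y)"
proof -
  have off: "(\<Sum>z\<in>V - {y}. g z * L_mat Sig n r1 r2 r3 z y) = (\<Sum>c\<in>C. g (flip c y) * w c / 2)"
  proof -
    have "S_off Sig n r1 r2 r3 z y = 0" if "\<forall>c\<in>C. z \<noteq> flip c y" for z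
      using that by (intro S_off_eq_0) (metis flip_flip)
    moreover have "S_off Sig n r1 r2 r3 (flip c y) y = w c" if "c \<in> C" for c
      using S_off_flip[OF that, of _ _ _ "flip c y"] by simp
    ultimately show ?thesis
      by (subst sum_over_flips[OF y]) (auto simp: L_mat_def S_mat_def intro: sum.cong)
  qed
  have "push g y = g y * (1 - W / 2) + (\<Sum>c\<in>C. g (flip c y) * w c / 2)"
    unfolding push_def using y finite_V by (simp add: sum.remove off L_mat_diag)
  moreover have "(\<Sum>c\<in>C. w c * avg c g y) = W * g y / 2 + (\<Sum>c\<in>C. g (flip c y) * w c / 2)"
  proof -
    have "(\<Sum>c\<in>C. w c * avg c g y) = (\<Sum>c\<in>C. w c * g y / 2 + g (flip c y) * w c / 2)"
      by (simp add: avg_def field_simps)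
    then show ?thesis
      by (simp add: sum.distrib flip: sum_divide_distrib sum_distrib_right)
  qed
  ultimately show ?thesis
    by (simp add: algebra_simps)
qed

lemma sum_flip: "c \<in> C \<Longrightarrow> (\<Sum>y\<in>V. f (flip c y)) = (\<Sum>y\<in>V. f y)"
  by (rule sum.reindex_bij_witness[where i = "flip c" and j = "flip c"]) (auto intro: flip_in_nfas)

lemma l1_nonneg: "0 \<le> l1 g"
  by (simp add: l1_def sum_nonneg)

lemma l1_avg_le: "c \<in> C \<Longrightarrow> l1 (avg c g) \<le> l1 g"
proof -
  assume c: "c \<in> C"
  have "l1 (avg c g) \<le> (\<Sum>y\<in>V. (\<bar>g y\<bar> + \<bar>g (flip c y)\<bar>) / 2)"
    unfolding l1_def avg_def by (rule sum_mono) (simp add: abs_triangle_ineq)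
  also have "\<dots> = l1 g"
    using sum_flip[OF c, of "\<lambda>y. \<bar>g y\<bar>"]
    by (simp add: l1_def sum.distrib flip: sum_divide_distrib)
  finally show ?thesis .
qed

lemma push_odd_under:
  assumes k: "k \<in> C" and h: "odd_under k h"
  shows "odd_under k (push h)"
  unfolding odd_under_def
proof
  fix y assume y: "y \<in> V"
  have "avg c h (flip k y) = - avg c h y" if c: "c \<in> C" for c
  proof -
    have "h (flip c (flip k y)) = - h (flip c y)"
      using h flip_in_nfas[OF y c] flip_commute unfolding odd_under_def by metis
    then show ?thesis
      using h y unfolding odd_under_def avg_def by (simp add: field_simps)
  qed
  then have "push h (flip k y) = - ((1 - W) * h y + (\<Sum>c\<in>C. w c * avg c h y))"
    using h y push_eq[OF flip_in_nfas[OF y k]]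
    unfolding odd_under_def by (simp add: sum_negf[symmetric])
  also have "\<dots> = - push h y"
    using push_eq[OF y] by simp
  finally show "push h (flip k y) = - push h y" .
qed

text \<open>Averaging over \<open>k\<close> annihilates a function odd under \<open>k\<close>, so the weight \<open>w k\<close> drops out.\<close>
lemma l1_push_odd_le:
  assumes k: "k \<in> C" and h: "odd_under k h"
  shows "l1 (push h) \<le> (1 - w k) * l1 h"
proof -
  have pointwise: "\<bar>push h y\<bar> \<le> (1 - W) * \<bar>h y\<bar> + (\<Sum>c\<in>C - {k}. w c * \<bar>avg c h y\<bar>)"
    if y: "y \<in> V" for y
  proof -
    have "avg k h y = 0"
      using h y unfolding odd_under_def avg_def by simp
    then have "push h y = (1 - W) * h y + (\<Sum>c\<in>C - {k}. w c * avg c h y)"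
      using push_eq[OF y] finite_C k by (simp add: sum.remove)
    also have "\<bar>\<dots>\<bar> \<le> \<bar>(1 - W) * h y\<bar> + (\<Sum>c\<in>C - {k}. \<bar>w c * avg c h y\<bar>)"
      by (rule order_trans[OF abs_triangle_ineq add_left_mono[OF sum_abs]])
    finally show ?thesis
      using total_weight_le_1 weight_nonneg by (simp add: abs_mult)
  qed
  have "l1 (push h) \<le> (\<Sum>y\<in>V. (1 - W) * \<bar>h y\<bar> + (\<Sum>c\<in>C - {k}. w c * \<bar>avg c h y\<bar>))"
    unfolding l1_def by (rule sum_mono) (use pointwise in auto)
  also have "\<dots> = (1 - W) * l1 h + (\<Sum>c\<in>C - {k}. w c * l1 (avg c h))"
    unfolding l1_def by (simp add: sum.distrib sum_distrib_left sum.swap[of _ "C - {k}"])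
  also have "\<dots> \<le> (1 - W) * l1 h + (\<Sum>c\<in>C - {k}. w c * l1 h)"
    using weight_nonneg l1_avg_le by (intro add_left_mono sum_mono mult_left_mono) auto
  also have "(\<Sum>c\<in>C - {k}. w c * l1 h) = (W - w k) * l1 h"
    using finite_C k by (simp add: sum_diff1 flip: sum_distrib_right)
  finally show ?thesis
    by (simp add: algebra_simps)
qed

lemma l1_push_power_odd_le:
  assumes k: "k \<in> C" and h: "odd_under k h"
  shows "odd_under k ((push ^^ t) h) \<and> l1 ((push ^^ t) h) \<le> (1 - w k) ^ t * l1 h"
proof (induction t)
  case 0
  then show ?case using h by simp
next
  case (Suc t)
  have "0 \<le> 1 - w k"
    using weight_le_total[OF k] total_weight_le_1 by simp
  then have "l1 ((push ^^ Suc t) h) \<le> (1 - w k) * ((1 - w k) ^ t * l1 h)"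
    using Suc l1_push_odd_le[OF k] by (fastforce intro: order_trans mult_left_mono)
  then show ?case
    using Suc push_odd_under[OF k] by (simp add: mult.assoc)
qed

lemma l1_avg_defect_le: "c \<in> C \<Longrightarrow> l1 (\<lambda>y. g y - avg c g y) \<le> l1 g"
proof -
  assume c: "c \<in> C"
  have "l1 (\<lambda>y. g y - avg c g y) \<le> (\<Sum>y\<in>V. (\<bar>g y\<bar> + \<bar>g (flip c y)\<bar>) / 2)"
    unfolding l1_def avg_def by (rule sum_mono) (auto simp: abs_if field_simps)
  also have "\<dots> = l1 g"
    using sum_flip[OF c, of "\<lambda>y. \<bar>g y\<bar>"] by (simp add: l1_def sum.distrib flip: sum_divide_distrib)
  finally show ?thesis .
qed

lemma l1_push_power_avg_defect_le:
  assumes k: "k \<in> C"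
  shows "l1 ((push ^^ t) (\<lambda>y. g y - avg k g y)) \<le> (1 - w k) ^ t * l1 g"
proof -
  have "odd_under k (\<lambda>y. g y - avg k g y)"
    by (simp add: odd_under_def avg_def field_simps)
  then have "l1 ((push ^^ t) (\<lambda>y. g y - avg k g y)) \<le> (1 - w k) ^ t * l1 (\<lambda>y. g y - avg k g y)"
    using l1_push_power_odd_le[OF k] by blast
  also have "\<dots> \<le> (1 - w k) ^ t * l1 g"
    using l1_avg_defect_le[OF k] weight_le_total[OF k] total_weight_le_1
    by (intro mult_left_mono) auto
  finally show ?thesis .
qed

lemma push_power_add_sum:
  "(push ^^ t) (\<lambda>y. f y + (\<Sum>i\<in>I. g i y)) y = (push ^^ t) f y + (\<Sum>i\<in>I. (push ^^ t) (g i) y)"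
proof (induction t arbitrary: y)
  case 0
  then show ?case by simp
next
  case (Suc t)
  then show ?case
    by (simp add: push_def distrib_right sum.distrib sum_distrib_right sum.swap[of _ I])
qed

lemma push_power_const:
  assumes "\<forall>y\<in>V. f y = a"
  shows "\<forall>y\<in>V. (push ^^ t) f y = a"
proof (induction t)
  case 0
  then show ?case using assms by simp
next
  case (Suc t)
  show ?case
  proof
    fix y assume y: "y \<in> V"
    have "avg c ((push ^^ t) f) y = a" if "c \<in> C" for c
      using Suc y flip_in_nfas[OF y that] unfolding avg_def by simp
    then have "(push ^^ Suc t) f y = (1 - W) * a + (\<Sum>c\<in>C. w c * a)"
      using Suc y push_eq[OF y] by simp
    then show "(push ^^ Suc t) f y = a"
      by (simp add: algebra_simps flip: sum_distrib_left)
  qed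
qed

lemma L_pow_eq_push_power: "L_pow Sig n r1 r2 r3 t x = (push ^^ t) (\<lambda>y. if x = y then 1 else 0)"
  by (induction t) (auto simp: push_def)

lemma l1_avg_iter_le:
  assumes "set cs = C" and "i \<le> length cs"
  shows "l1 (avg_iter cs g i) \<le> l1 g"
  using assms(2)
proof (induction i)
  case 0
  then show ?case by simp
next
  case (Suc i)
  have "cs ! i \<in> C"
    using nth_mem[of i cs] Suc.prems assms(1) by simp
  then have "l1 (avg_iter cs g (Suc i)) \<le> l1 (avg_iter cs g i)"
    unfolding avg_iter.simps by (rule l1_avg_le)
  also have "\<dots> \<le> l1 g"
    using Suc by simp
  finally show ?case .
qed

lemma avg_iter_point_mass:
  assumes x: "x \<in> V" and cs: "distinct cs" "set cs = C"
    and i: "i \<le> length cs" and y: "y \<in> V"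
  shows "avg_iter cs (\<lambda>y. if x = y then 1 else 0) i y
    = of_bool (agree_on (C - set (take i cs)) x y) / 2 ^ i"
  using i y
proof (induction i arbitrary: y)
  case 0
  then show ?case
    using nfas_eqI[OF x 0(2)] by (auto simp: agree_on_def)
next
  case (Suc i)
  let ?U = "C - set (take i cs)" and ?k = "cs ! i"
  have i: "i < length cs"
    using Suc.prems by simp
  have "distinct (take i cs @ ?k # drop (Suc i) cs)"
    using cs(1) by (simp flip: id_take_nth_drop[OF i])
  then have k: "?k \<in> ?U"
    using nth_mem[OF i] cs(2) by simp
  have "avg_iter cs (\<lambda>y. if x = y then 1 else 0) (Suc i) y
      = (of_bool (agree_on ?U x y) + of_bool (agree_on ?U x (flip ?k y))) / 2 ^ Suc i"
    using Suc.IH[OF less_imp_le[OF i]] Suc.prems(2) flip_in_nfas[OF Suc.prems(2)] k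
    by (simp add: avg_def add_divide_distrib)
  also have "\<dots> = of_bool (agree_on (?U - {?k}) x y) / 2 ^ Suc i"
    by (simp only: of_bool_agree_on_flip[OF k])
  also have "?U - {?k} = C - set (take (Suc i) cs)"
    using i by (auto simp: take_Suc_conv_app_nth)
  finally show ?case .
qed

lemma avg_iter_point_mass_uniform:
  assumes x: "x \<in> V" and cs: "distinct cs" "set cs = C" and y: "y \<in> V"
  shows "avg_iter cs (\<lambda>y. if x = y then 1 else 0) (length cs) y = unif Sig n y"
  using avg_iter_point_mass[OF x cs order_refl y] card_nfas[OF finite_Sig] distinct_card[OF cs(1)] cs(2)
  by (simp add: unif_def agree_on_def)

theorem tv_dist_le:
  assumes x: "x \<in> V"
  shows "tv_dist Sig n r1 r2 r3 t x \<le> (\<Sum>c\<in>C. (1 - w c) ^ t) / 2"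
proof -
  obtain cs where cs: "distinct cs" "set cs = C"
    using finite_distinct_list[OF finite_C] by blast
  define N where "N = length cs"
  define G where "G = avg_iter cs (\<lambda>y. if x = y then 1 else 0)"
  define h where "h i = (\<lambda>y. G i y - avg (cs ! i) (G i) y)" for i
  have csC: "cs ! i \<in> C" if "i < N" for i
    using that cs(2) nth_mem[of i cs] by (simp add: N_def)
  have decomposition: "(\<lambda>y. if x = y then 1 else 0) = (\<lambda>y. G N y + (\<Sum>i<N. h i y))"
  proof
    fix y
    show "(if x = y then 1 else 0) = G N y + (\<Sum>i<N. h i y)"
      using sum_lessThan_telescope'[of "\<lambda>i. G i y" N] by (simp add: h_def G_def)
  qed
  have deviation: "L_pow Sig n r1 r2 r3 t x y - unif Sig n y = (\<Sum>i<N. (push ^^ t) (h i) y)"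
    if y: "y \<in> V" for y
  proof -
    have "L_pow Sig n r1 r2 r3 t x y = (push ^^ t) (G N) y + (\<Sum>i<N. (push ^^ t) (h i) y)"
      unfolding L_pow_eq_push_power decomposition by (rule push_power_add_sum)
    moreover have "(push ^^ t) (G N) y = unif Sig n y"
      using push_power_const[of "G N" "unif Sig n y" t] avg_iter_point_mass_uniform[OF x cs] y
      by (simp add: G_def N_def unif_def)
    ultimately show ?thesis
      by simp
  qed
  have "l1 (\<lambda>y. if x = y then 1 else 0) = 1"
    using x finite_V by (simp add: l1_def if_distrib cong: if_cong)
  then have l1_G: "l1 (G i) \<le> 1" if "i \<le> N" for i
    using l1_avg_iter_le[OF cs(2) that[unfolded N_def], of "\<lambda>y. if x = y then 1 else 0"]
    by (simp add: G_def)
  have l1_h: "l1 ((push ^^ t) (h i)) \<le> (1 - w (cs ! i)) ^ t" if i: "i < N" for i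
  proof -
    have "l1 ((push ^^ t) (h i)) \<le> (1 - w (cs ! i)) ^ t * l1 (G i)"
      unfolding h_def by (rule l1_push_power_avg_defect_le[OF csC[OF i]])
    also have "\<dots> \<le> (1 - w (cs ! i)) ^ t"
      using l1_G[of i] l1_nonneg[of "G i"] i weight_le_total[OF csC[OF i]] total_weight_le_1
      by (intro mult_right_le_one_le) auto
    finally show ?thesis .
  qed
  have "tv_dist Sig n r1 r2 r3 t x = (\<Sum>y\<in>V. \<bar>\<Sum>i<N. (push ^^ t) (h i) y\<bar>) / 2"
    by (simp add: tv_dist_def deviation)
  also have "\<dots> \<le> (\<Sum>y\<in>V. \<Sum>i<N. \<bar>(push ^^ t) (h i) y\<bar>) / 2"
    by (intro divide_right_mono sum_mono sum_abs) auto
  also have "\<dots> = (\<Sum>i<N. l1 ((push ^^ t) (h i))) / 2"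
    unfolding l1_def by (subst sum.swap) (rule refl)
  also have "\<dots> \<le> (\<Sum>i<N. (1 - w (cs ! i)) ^ t) / 2"
    using l1_h by (intro divide_right_mono sum_mono) auto
  also have "(\<Sum>i<N. (1 - w (cs ! i)) ^ t) = (\<Sum>c\<in>C. (1 - w c) ^ t)"
    using sum.reindex_bij_betw[OF bij_betw_nth[OF cs(1), of "{..<N}" C]] cs N_def by simp
  finally show ?thesis .
qed

lemma mixed_if_sum_decay_le:
  assumes "(\<Sum>c\<in>C. (1 - w c) ^ t) \<le> 2 * \<epsilon>"
  shows "mixed Sig n r1 r2 r3 \<epsilon> t"
  unfolding mixed_def
proof
  fix x assume "x \<in> V"
  then have "tv_dist Sig n r1 r2 r3 t x \<le> (\<Sum>c\<in>C. (1 - w c) ^ t) / 2"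
    by (rule tv_dist_le)
  then show "tv_dist Sig n r1 r2 r3 t x \<le> \<epsilon>"
    using assms by simp
qed

lemma sum_decay_eq:
  "(\<Sum>c\<in>C. (1 - w c) ^ t) = real n * (1 - r1 / real n) ^ t + real n * (1 - r2 / real n) ^ t
     + real (card Sig) * real n ^ 2 * (1 - r3 / (real (card Sig) * real n ^ 2)) ^ t"
  by (simp add: sum_coords[OF finite_Sig] coord_weight_def card_cartesian_product power2_eq_square)

end

lemma scaled_power_decay_le:
  fixes m r e :: real
  assumes m: "m \<ge> 1" and r: "0 < r" "r \<le> 1" and e: "0 < e"
    and T: "real T \<ge> m / r * (ln m + ln (1 / (r * e)))"
  shows "m * (1 - r / m) ^ T \<le> r * e"
proof -
  have "r / m \<le> 1"
    using m r by simp
  then have "(1 - r / m) ^ T \<le> exp (- (r / m)) ^ T"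
    using exp_ge_add_one_self[of "- (r / m)"] by (intro power_mono) auto
  also have "\<dots> = exp (- (r / m * real T))"
    by (simp flip: exp_of_nat_mult)
  also have "\<dots> \<le> exp (- (ln m + ln (1 / (r * e))))"
    using T m r by (simp add: field_simps)
  also have "\<dots> = r * e / m"
    using m r e by (simp add: exp_diff exp_minus field_simps)
  finally show ?thesis
    using m by (simp add: field_simps)
qed

lemma mixing_exponent_nonneg:
  fixes m r e :: real
  assumes "m \<ge> 1" and "0 < r" "r \<le> 1" and "0 < e" "e < 1"
  shows "0 \<le> m / r * (ln m + ln (1 / (r * e)))"
  using assms mult_le_one[of r e] by simp

theorem proposition2:
  fixes Sig :: "'a set" and n :: nat and \<rho>1 \<rho>2 \<rho>3 \<epsilon> :: real
  assumes "finite Sig" and "card Sig \<ge> 2" and "n \<ge> 1"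
    and "\<rho>1 > 0" and "\<rho>2 > 0" and "\<rho>3 > 0" and "\<rho>1 + \<rho>2 + \<rho>3 \<le> 1"
    and "0 < \<epsilon>" and "\<epsilon> < 1"
  shows "(\<exists>t. mixed Sig n \<rho>1 \<rho>2 \<rho>3 \<epsilon> t) \<and>
    real (mixing_time Sig n \<rho>1 \<rho>2 \<rho>3 \<epsilon>) \<le>
      max (real_of_int \<lceil>real n / \<rho>1 * (ln (real n) + ln (1 / (\<rho>1 * \<epsilon>)))\<rceil>)
       (max (real_of_int \<lceil>real n / \<rho>2 * (ln (real n) + ln (1 / (\<rho>2 * \<epsilon>)))\<rceil>)
            (real_of_int \<lceil>real (card Sig) * real n ^ 2 / \<rho>3 *
               (ln (real (card Sig) * real n ^ 2) + ln (1 / (\<rho>3 * \<epsilon>)))\<rceil>))"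
  (is "_ \<and> _ \<le> max (real_of_int \<lceil>?E1\<rceil>) (max (real_of_int \<lceil>?E2\<rceil>) (real_of_int \<lceil>?E3\<rceil>))")
proof -
  interpret nfa_chain Sig n \<rho>1 \<rho>2 \<rho>3
    using assms by unfold_locales auto
  define T where "T = nat (max \<lceil>?E1\<rceil> (max \<lceil>?E2\<rceil> \<lceil>?E3\<rceil>))"
  have m: "real (card Sig) * real n ^ 2 \<ge> 1" "real n \<ge> 1"
    using assms(2,3) one_le_power[of "real n" 2] by (auto intro: mult_ge1_I)
  have "0 \<le> ?E1" "0 \<le> ?E2" "0 \<le> ?E3"
    by (rule mixing_exponent_nonneg; use assms(4-9) m in simp)+
  then have T: "real T = max (real_of_int \<lceil>?E1\<rceil>) (max (real_of_int \<lceil>?E2\<rceil>) (real_of_int \<lceil>?E3\<rceil>))"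
    "?E1 \<le> real T" "?E2 \<le> real T" "?E3 \<le> real T"
    by (auto simp: T_def max_def intro: order_trans[OF le_of_int_ceiling])
  have "(\<Sum>c\<in>C. (1 - w c) ^ T) \<le> \<rho>1 * \<epsilon> + \<rho>2 * \<epsilon> + \<rho>3 * \<epsilon>"
    unfolding sum_decay_eq
    by (intro add_mono scaled_power_decay_le; use T(2-4) m assms(4-8) in simp)
  also have "\<dots> \<le> 2 * \<epsilon>"
    using assms(7,8) by (simp add: mult_right_le_one_le flip: distrib_right)
  finally have "mixed Sig n \<rho>1 \<rho>2 \<rho>3 \<epsilon> T"
    by (rule mixed_if_sum_decay_le)
  then show ?thesis
    using Least_le[of "mixed Sig n \<rho>1 \<rho>2 \<rho>3 \<epsilon>" T] T(1) by (auto simp: mixing_time_def)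
qed

end
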